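(* Let $G$ be a finite, simple, connected graph with $m$ edges and let $k \geq 2$ be an integer. Then $$\chi_{dd}(P_{k+1}) \leq \chi_{dd}(S_k(G)) \leq (m-1)\chi_{dd}(P_k) + \chi_{dd}(P_{k+1}),$$ where $S_k(G)$ is the $k$-subdivision of $G$, i.e. the graph obtained from $G$ by replacing each edge $uv$ with a path of length $k$ (with $k-1$ new internal vertices) joining $u$ and $v$, and $P_n$ denotes the path on $n$ vertices.
   Context: All graphs are finite, undirected and simple. For a vertex $w$, $N(w)$ is its open neighborhood and $N[w]=N(w)\cup\{w\}$ its closed neighborhood. A vertex $w$ dominates a set $S$ of vertices if $S \subseteq N[w]$. A domination coloring of a graph $H$ is a proper vertex coloring of $H$ (adjacent vertices receive different colors; a color class is the set of all vertices receiving a given color) such that every vertex of $H$ dominates at least one color class (possibly its own class), and every color class is dominated by at least one vertex of $H$. The domination chromatic number $\chi_{dd}(H)$ is the minimum number of color classes in a domination coloring of $H$. *)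

theory Defs
  imports Main
begin

definition simple_graph :: "'a set \<Rightarrow> ('a \<Rightarrow> 'a \<Rightarrow> bool) \<Rightarrow> bool" where
  "simple_graph V E \<longleftrightarrow> finite V \<and>
     (\<forall>u v. E u v \<longrightarrow> u \<in> V \<and> v \<in> V \<and> u \<noteq> v \<and> E v u)"

definition connected_graph :: "'a set \<Rightarrow> ('a \<Rightarrow> 'a \<Rightarrow> bool) \<Rightarrow> bool" where
  "connected_graph V E \<longleftrightarrow> V \<noteq> {} \<and> (\<forall>u\<in>V. \<forall>v\<in>V. E\<^sup>*\<^sup>* u v)"

definition num_edges :: "'a set \<Rightarrow> ('a \<Rightarrow> 'a \<Rightarrow> bool) \<Rightarrow> nat" where
  "num_edges V E = card {{u, v} | u v. u \<in> V \<and> v \<in> V \<and> E u v}"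

definition closed_nbhd :: "'a set \<Rightarrow> ('a \<Rightarrow> 'a \<Rightarrow> bool) \<Rightarrow> 'a \<Rightarrow> 'a set" where
  "closed_nbhd V E w = {x \<in> V. E w x} \<union> {w}"

definition color_class :: "'a set \<Rightarrow> ('a \<Rightarrow> nat) \<Rightarrow> nat \<Rightarrow> 'a set" where
  "color_class V c i = {x \<in> V. c x = i}"

definition dom_coloring :: "'a set \<Rightarrow> ('a \<Rightarrow> 'a \<Rightarrow> bool) \<Rightarrow> ('a \<Rightarrow> nat) \<Rightarrow> bool" where
  "dom_coloring V E c \<longleftrightarrow>
     (\<forall>u\<in>V. \<forall>v\<in>V. E u v \<longrightarrow> c u \<noteq> c v) \<and>
     (\<forall>w\<in>V. \<exists>i\<in>c ` V. color_class V c i \<subseteq> closed_nbhd V E w) \<and>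
     (\<forall>i\<in>c ` V. \<exists>w\<in>V. color_class V c i \<subseteq> closed_nbhd V E w)"

definition chi_dd :: "'a set \<Rightarrow> ('a \<Rightarrow> 'a \<Rightarrow> bool) \<Rightarrow> nat" where
  "chi_dd V E = (LEAST n. \<exists>c :: 'a \<Rightarrow> nat. dom_coloring V E c \<and> card (c ` V) = n)"

definition path_V :: "nat \<Rightarrow> nat set" where
  "path_V n = {0..<n}"

definition path_E :: "nat \<Rightarrow> nat \<Rightarrow> nat \<Rightarrow> bool" where
  "path_E n i j \<longleftrightarrow> i < n \<and> j < n \<and> (j = i + 1 \<or> i = j + 1)"

text \<open>k-subdivision. Original vertices are Inl u; for an edge uv with u < v,
the internal vertices are Inr (u, v, i), 0 < i < k, at distance i from u.\<close>
definition sub_pos :: "nat \<Rightarrow> 'a \<Rightarrow> 'a \<Rightarrow> nat \<Rightarrow> 'a + ('a \<times> 'a \<times> nat)" where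
  "sub_pos k u v i = (if i = 0 then Inl u else if i = k then Inl v else Inr (u, v, i))"

definition subdiv_V :: "nat \<Rightarrow> ('a::linorder) set \<Rightarrow> ('a \<Rightarrow> 'a \<Rightarrow> bool)
    \<Rightarrow> ('a + ('a \<times> 'a \<times> nat)) set" where
  "subdiv_V k V E = Inl ` V \<union> {Inr (u, v, i) | u v i. u < v \<and> E u v \<and> 0 < i \<and> i < k}"

definition subdiv_E :: "nat \<Rightarrow> ('a::linorder) set \<Rightarrow> ('a \<Rightarrow> 'a \<Rightarrow> bool)
    \<Rightarrow> 'a + ('a \<times> 'a \<times> nat) \<Rightarrow> 'a + ('a \<times> 'a \<times> nat) \<Rightarrow> bool" where
  "subdiv_E k V E x y \<longleftrightarrow> (\<exists>u v i. u < v \<and> E u v \<and> i < k \<and>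
      ((x = sub_pos k u v i \<and> y = sub_pos k u v (i + 1)) \<or>
       (y = sub_pos k u v i \<and> x = sub_pos k u v (i + 1))))"

end

(* Restricting a domination coloring of H to a vertex set S in which every outside vertex has at
   most one neighbor yields a domination coloring of H[S] with no new colors: a vertex of S that
   dominates no class meeting S takes the color of a class it dominates outside S, and these
   colors become distinct singleton classes. So chi_dd(H[S]) <= chi_dd(H). Applied to the k + 1
   vertices of one subdivided edge of S_k(G) this is the lower bound; applied to P_n inside
   P_(n+1) it shows that chi_dd of paths is monotone.

   For the upper bound, a spanning tree rooted at an end of an edge e0 assigns each original vertex
   other than the ends of e0 the edge to its parent. This partitions S_k(G) into a copy of P_(k+1)
   for e0 and, for each of the other m - 1 edges, a path with k or k - 1 vertices. Coloring the
   parts with disjoint palettes gives a domination coloring, hence the bound. *)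

theory Submission
  imports Defs "HOL-Library.Nat_Bijection"
begin

section \<open>Domination colorings\<close>

lemma chi_dd_le_card:
  assumes "dom_coloring V E c"
  shows "chi_dd V E \<le> card (c ` V)"
  unfolding chi_dd_def by (rule Least_le) (use assms in blast)

lemma dom_coloring_proper:
  assumes "dom_coloring V E c" "u \<in> V" "v \<in> V" "E u v"
  shows "c u \<noteq> c v"
  using assms unfolding dom_coloring_def by blast

lemma dom_coloring_inj:
  assumes "inj_on c V" "\<forall>x\<in>V. \<not> E x x"
  shows "dom_coloring V E c"
proof -
  have "color_class V c (c w) = {w}" if "w \<in> V" for w
    using assms(1) that unfolding color_class_def inj_on_def by blast
  then show ?thesis
    using assms unfolding dom_coloring_def closed_nbhd_def inj_on_def by auto
qed

lemma chi_dd_attained: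
  assumes "finite V" "\<forall>x\<in>V. \<not> E x x"
  obtains c where "dom_coloring V E c" "card (c ` V) = chi_dd V E"
proof -
  obtain h :: "'a \<Rightarrow> nat" where "inj_on h V"
    using finite_imp_inj_to_nat_seg[OF assms(1)] by blast
  then have "\<exists>n c. dom_coloring V E c \<and> card (c ` V) = n"
    using dom_coloring_inj assms(2) by blast
  from LeastI_ex[OF this] show ?thesis
    using that unfolding chi_dd_def by blast
qed

lemma simple_graph_edge: "simple_graph V E \<Longrightarrow> E u v \<Longrightarrow> u \<in> V \<and> v \<in> V \<and> u \<noteq> v \<and> E v u"
  unfolding simple_graph_def by blast

lemma dom_coloring_transfer:
  assumes dc: "dom_coloring A EA c" and bij: "bij_betw g A B"
    and edges: "\<And>a b. a \<in> A \<Longrightarrow> b \<in> A \<Longrightarrow> EB (g a) (g b) \<longleftrightarrow> EA a b"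
    and col: "\<And>a. a \<in> A \<Longrightarrow> d (g a) = c a"
  shows "dom_coloring B EB d" "d ` B = c ` A"
proof -
  have B: "B = g ` A" and inj: "inj_on g A"
    using bij by (auto simp: bij_betw_def)
  show img: "d ` B = c ` A"
    unfolding B image_image using col by (auto simp: image_iff)
  have class_image: "color_class B d i = g ` color_class A c i" for i
    unfolding color_class_def B using col by auto
  have nbhd: "closed_nbhd B EB (g a) = g ` closed_nbhd A EA a" if "a \<in> A" for a
    unfolding closed_nbhd_def B using edges that by auto
  have image_subset: "g ` X \<subseteq> g ` Y \<longleftrightarrow> X \<subseteq> Y" if "X \<subseteq> A" "Y \<subseteq> A" for X Y
    using inj_on_image_mem_iff[OF inj _ that(2)] that(1) by blast
  have dominates: "color_class B d i \<subseteq> closed_nbhd B EB (g a) \<longleftrightarrow>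
      color_class A c i \<subseteq> closed_nbhd A EA a" if "a \<in> A" for a i
    unfolding class_image nbhd[OF that]
    by (rule image_subset) (use that in \<open>auto simp: color_class_def closed_nbhd_def\<close>)
  show "dom_coloring B EB d"
    using dc dominates edges col unfolding dom_coloring_def img B by auto
qed

lemma chi_dd_iso:
  assumes bij: "bij_betw g A B"
    and edges: "\<And>a b. a \<in> A \<Longrightarrow> b \<in> A \<Longrightarrow> EB (g a) (g b) \<longleftrightarrow> EA a b"
  shows "chi_dd B EB = chi_dd A EA"
proof -
  define h where "h = the_inv_into A g"
  have bij_h: "bij_betw h B A"
    unfolding h_def by (rule bij_betw_the_inv_into[OF bij])
  have gh: "g (h b) = b" if "b \<in> B" for b
    unfolding h_def using f_the_inv_into_f_bij_betw[OF bij that] .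
  have hg: "h (g a) = a" if "a \<in> A" for a
    unfolding h_def using the_inv_into_f_f bij that by (metis bij_betw_def)
  have "(\<exists>c. dom_coloring A EA c \<and> card (c ` A) = n) \<longleftrightarrow>
        (\<exists>d. dom_coloring B EB d \<and> card (d ` B) = n)" for n
  proof
    assume "\<exists>c. dom_coloring A EA c \<and> card (c ` A) = n"
    then obtain c where "dom_coloring A EA c" "card (c ` A) = n" by blast
    then show "\<exists>d. dom_coloring B EB d \<and> card (d ` B) = n"
      using dom_coloring_transfer[of A EA c g B EB "c \<circ> h"] bij edges hg by auto
  next
    assume "\<exists>d. dom_coloring B EB d \<and> card (d ` B) = n"
    then obtain d where "dom_coloring B EB d" "card (d ` B) = n" by blast
    moreover have "EA (h a) (h b) \<longleftrightarrow> EB a b" if "a \<in> B" "b \<in> B" for a b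
      using edges[of "h a" "h b"] bij_betwE[OF bij_h] that gh by auto
    ultimately show "\<exists>c. dom_coloring A EA c \<and> card (c ` A) = n"
      using dom_coloring_transfer[of B EB d h A EA "d \<circ> g"] bij_h gh by auto
  qed
  then show ?thesis
    unfolding chi_dd_def by simp
qed

lemma dom_coloring_disjoint_union:
  assumes part_idx: "\<And>x. x \<in> V \<Longrightarrow> \<iota> x \<in> J"
    and parts: "\<And>j. j \<in> J \<Longrightarrow> dom_coloring {x\<in>V. \<iota> x = j} E (D j)"
    and inj: "inj_on F (J \<times> UNIV)"
  shows "dom_coloring V E (\<lambda>x. F (\<iota> x, D (\<iota> x) x))"
proof -
  define P where "P j = {x\<in>V. \<iota> x = j}" for j
  define c where "c x = F (\<iota> x, D (\<iota> x) x)" for x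
  have c_eq: "c y = F (j, \<delta>) \<longleftrightarrow> \<iota> y = j \<and> D j y = \<delta>" if "y \<in> V" "j \<in> J" for y j \<delta>
    using inj_onD[OF inj, of "(\<iota> y, D (\<iota> y) y)" "(j, \<delta>)"] part_idx[OF that(1)] that(2)
    unfolding c_def by auto
  have class_eq: "color_class V c (F (j, \<delta>)) = color_class (P j) (D j) \<delta>" if "j \<in> J" for j \<delta>
    unfolding color_class_def P_def using c_eq that by auto
  have nbhd: "closed_nbhd (P j) E w \<subseteq> closed_nbhd V E w" for j w
    unfolding closed_nbhd_def P_def by auto
  have own_part: "x \<in> P (\<iota> x)" if "x \<in> V" for x
    using that unfolding P_def by simp
  have "dom_coloring V E c"
    unfolding dom_coloring_def
  proof (intro conjI ballI impI)
    fix u v assume uv: "u \<in> V" "v \<in> V" "E u v"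
    show "c u \<noteq> c v"
    proof
      assume "c u = c v"
      then have "\<iota> v = \<iota> u" "D (\<iota> u) v = D (\<iota> u) u"
        using c_eq[of v "\<iota> u" "D (\<iota> u) u"] uv part_idx unfolding c_def by auto
      then show False
        using dom_coloring_proper[OF parts[OF part_idx[OF uv(1)]], of u v] uv by simp
    qed
  next
    fix w assume w: "w \<in> V"
    obtain \<delta> where \<delta>: "\<delta> \<in> D (\<iota> w) ` P (\<iota> w)"
        "color_class (P (\<iota> w)) (D (\<iota> w)) \<delta> \<subseteq> closed_nbhd (P (\<iota> w)) E w"
      using parts[OF part_idx[OF w]] own_part[OF w] unfolding dom_coloring_def P_def by blast
    then have "F (\<iota> w, \<delta>) \<in> c ` V"
      unfolding c_def P_def by (auto intro!: image_eqI)
    then show "\<exists>i\<in>c ` V. color_class V c i \<subseteq> closed_nbhd V E w"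
      using \<delta>(2) class_eq[OF part_idx[OF w]] nbhd by blast
  next
    fix i assume "i \<in> c ` V"
    then obtain x where x: "x \<in> V" "i = F (\<iota> x, D (\<iota> x) x)"
      unfolding c_def by auto
    obtain w where "w \<in> P (\<iota> x)"
        "color_class (P (\<iota> x)) (D (\<iota> x)) (D (\<iota> x) x) \<subseteq> closed_nbhd (P (\<iota> x)) E w"
      using parts[OF part_idx[OF x(1)]] own_part[OF x(1)] unfolding dom_coloring_def P_def by blast
    then show "\<exists>w\<in>V. color_class V c i \<subseteq> closed_nbhd V E w"
      using x class_eq[OF part_idx[OF x(1)]] nbhd unfolding P_def by blast
  qed
  then show ?thesis
    unfolding c_def .
qed

lemma chi_dd_partition_le:
  assumes "finite V" "\<forall>x\<in>V. \<not> E x x" "finite J" "\<And>x. x \<in> V \<Longrightarrow> \<iota> x \<in> J"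
  shows "chi_dd V E \<le> (\<Sum>j\<in>J. chi_dd {x\<in>V. \<iota> x = j} E)"
proof -
  define P where "P j = {x\<in>V. \<iota> x = j}" for j
  have "\<exists>d. dom_coloring (P j) E d \<and> card (d ` P j) = chi_dd (P j) E" for j
    by (rule chi_dd_attained[of "P j" E]) (use assms in \<open>auto simp: P_def\<close>)
  then obtain D where D: "\<And>j. dom_coloring (P j) E (D j)" "\<And>j. card (D j ` P j) = chi_dd (P j) E"
    by metis
  obtain idx :: "'b \<Rightarrow> nat" where idx: "inj_on idx J"
    using finite_imp_inj_to_nat_seg[OF assms(3)] by blast
  define F where "F = (\<lambda>(j, \<delta>). prod_encode (idx j, \<delta>))"
  have "inj_on F (J \<times> UNIV)"
    using idx unfolding F_def inj_on_def by (auto simp: prod_encode_eq)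
  then have "dom_coloring V E (\<lambda>x. F (\<iota> x, D (\<iota> x) x))"
    using dom_coloring_disjoint_union[of V \<iota> J E D F] assms(4) D(1) unfolding P_def by blast
  then have "chi_dd V E \<le> card ((\<lambda>x. F (\<iota> x, D (\<iota> x) x)) ` V)"
    by (rule chi_dd_le_card)
  also have "\<dots> \<le> card (\<Union>j\<in>J. (\<lambda>\<delta>. F (j, \<delta>)) ` D j ` P j)"
    by (rule card_mono) (use assms in \<open>auto simp: P_def\<close>)
  also have "\<dots> \<le> (\<Sum>j\<in>J. card ((\<lambda>\<delta>. F (j, \<delta>)) ` D j ` P j))"
    by (rule card_UN_le[OF assms(3)])
  also have "\<dots> \<le> (\<Sum>j\<in>J. card (D j ` P j))"
    by (rule sum_mono) (rule card_image_le, use assms(1) in \<open>auto simp: P_def\<close>)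
  also have "\<dots> = (\<Sum>j\<in>J. chi_dd (P j) E)"
    using D(2) by simp
  finally show ?thesis
    unfolding P_def .
qed

section \<open>Restriction to a subgraph with one-neighbor boundary\<close>

locale dom_coloring_restriction =
  fixes V :: "'a set" and E :: "'a \<Rightarrow> 'a \<Rightarrow> bool" and c :: "'a \<Rightarrow> nat" and S :: "'a set"
  assumes dc: "dom_coloring V E c" and sym: "\<And>x y. E x y \<Longrightarrow> E y x" and S_sub: "S \<subseteq> V"
    and one_nbr: "\<And>w x y. w \<in> V - S \<Longrightarrow> x \<in> S \<Longrightarrow> y \<in> S \<Longrightarrow> E w x \<Longrightarrow> E w y \<Longrightarrow> x = y"
begin

abbreviation "C \<equiv> color_class V c"
abbreviation "N \<equiv> closed_nbhd V E"

text \<open>Each unserved vertex is recolored with the color of a class it dominates; that class lies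
  outside \<open>S\<close>, so the color becomes a singleton class on \<open>S\<close>.\<close>
definition unserved :: "'a set" where
  "unserved = {x \<in> S. \<not> (\<exists>\<gamma>\<in>c ` V. C \<gamma> \<inter> S \<noteq> {} \<and> C \<gamma> \<subseteq> N x)}"

definition dominated_color :: "'a \<Rightarrow> nat" where
  "dominated_color x = (SOME \<gamma>. \<gamma> \<in> c ` V \<and> C \<gamma> \<subseteq> N x)"

definition restricted_coloring :: "'a \<Rightarrow> nat" where
  "restricted_coloring x = (if x \<in> unserved then dominated_color x else c x)"

abbreviation "c' \<equiv> restricted_coloring"
abbreviation "C' \<equiv> color_class S c'"

lemma in_V: "x \<in> S \<Longrightarrow> x \<in> V"
  using S_sub by blast

lemma unserved_in_S: "x \<in> unserved \<Longrightarrow> x \<in> S"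
  unfolding unserved_def by blast

lemma C_mem: "x \<in> C \<gamma> \<longleftrightarrow> x \<in> V \<and> c x = \<gamma>"
  unfolding color_class_def by simp

lemma C'_mem: "x \<in> C' \<gamma> \<longleftrightarrow> x \<in> S \<and> c' x = \<gamma>"
  unfolding color_class_def by simp

lemma N_mem: "y \<in> N x \<longleftrightarrow> y = x \<or> y \<in> V \<and> E x y"
  unfolding closed_nbhd_def by auto

lemma closed_nbhd_S: "x \<in> S \<Longrightarrow> closed_nbhd S E x = N x \<inter> S"
  using in_V unfolding closed_nbhd_def by auto

lemma dominated_color_spec:
  assumes "x \<in> S"
  shows "dominated_color x \<in> c ` V" "C (dominated_color x) \<subseteq> N x"
proof -
  have "\<exists>\<gamma>. \<gamma> \<in> c ` V \<and> C \<gamma> \<subseteq> N x"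
    using dc in_V[OF assms] unfolding dom_coloring_def by blast
  from someI_ex[OF this] show "dominated_color x \<in> c ` V" "C (dominated_color x) \<subseteq> N x"
    unfolding dominated_color_def by blast+
qed

lemma dominated_color_outside:
  "x \<in> unserved \<Longrightarrow> C (dominated_color x) \<inter> S = {}"
  using dominated_color_spec unfolding unserved_def by blast

text \<open>Two unserved vertices with the same dominated color would have a common neighbor outside \<open>S\<close>.\<close>
lemma dominated_color_inj:
  assumes xy: "x \<in> unserved" "y \<in> unserved" "dominated_color x = dominated_color y"
  shows "x = y"
proof -
  have S: "x \<in> S" "y \<in> S"
    using xy unserved_in_S by auto
  obtain z where "z \<in> V" "c z = dominated_color x"
    using dominated_color_spec(1)[OF S(1)] by force
  then have z: "z \<in> C (dominated_color x)"
    by (simp add: C_mem)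
  have "z \<in> N x" "z \<in> N y" "z \<notin> S"
    using dominated_color_spec(2)[OF S(1)] dominated_color_spec(2)[OF S(2)]
      dominated_color_outside[OF xy(1)] xy(3) z by auto
  then have "E z x" "E z y" "z \<in> V - S"
    using S N_mem sym by auto
  then show "x = y"
    using one_nbr S by blast
qed

lemma class_unserved:
  assumes x: "x \<in> unserved"
  shows "C' (c' x) = {x}"
proof (intro equalityI subsetI)
  fix z assume "z \<in> C' (c' x)"
  then have z: "z \<in> S" "c' z = dominated_color x"
    using x unfolding C'_mem restricted_coloring_def by auto
  show "z \<in> {x}"
  proof (cases "z \<in> unserved")
    case True
    then show ?thesis
      using z x dominated_color_inj unfolding restricted_coloring_def by auto
  next
    case False
    then have "z \<in> C (dominated_color x) \<inter> S"
      using z in_V C_mem unfolding restricted_coloring_def by auto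
    then show ?thesis
      using dominated_color_outside[OF x] by blast
  qed
qed (use x unserved_in_S in \<open>auto simp: C'_mem\<close>)

lemma class_served:
  assumes x: "x \<in> S - unserved"
  shows "C' (c' x) \<subseteq> C (c x) \<inter> S"
proof
  fix z assume "z \<in> C' (c' x)"
  then have z: "z \<in> S" "c' z = c x"
    using x unfolding C'_mem restricted_coloring_def by auto
  have "z \<notin> unserved"
  proof
    assume "z \<in> unserved"
    then have "x \<in> C (dominated_color z) \<inter> S"
      using x z in_V C_mem unfolding restricted_coloring_def by auto
    then show False
      using dominated_color_outside[OF \<open>z \<in> unserved\<close>] by blast
  qed
  then show "z \<in> C (c x) \<inter> S"
    using z in_V C_mem unfolding restricted_coloring_def by auto
qed

lemma self_closed_nbhd: "{x} \<subseteq> closed_nbhd S E x"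
  unfolding closed_nbhd_def by blast

lemma restricted_proper:
  assumes xy: "x \<in> S" "y \<in> S" "E x y"
  shows "c' x \<noteq> c' y"
proof
  assume eq: "c' x = c' y"
  have "x \<noteq> y"
    using dom_coloring_proper[OF dc] xy in_V by blast
  then have "x \<notin> unserved" "y \<notin> unserved"
    using class_unserved eq xy C'_mem by (metis singletonD)+
  then show False
    using eq dom_coloring_proper[OF dc] xy in_V unfolding restricted_coloring_def by auto
qed

lemma restricted_vertex_dominates:
  assumes x: "x \<in> S"
  shows "\<exists>i\<in>c' ` S. C' i \<subseteq> closed_nbhd S E x"
proof (cases "x \<in> unserved")
  case True
  then show ?thesis
    using class_unserved self_closed_nbhd x by (metis image_eqI)
next
  case False
  then obtain \<gamma> y where "\<gamma> \<in> c ` V" "C \<gamma> \<subseteq> N x" "y \<in> C \<gamma>" "y \<in> S"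
    using x unfolding unserved_def by blast
  then have y: "y \<in> S" "y \<in> closed_nbhd S E x" "C (c y) \<subseteq> N x"
    using closed_nbhd_S[OF x] C_mem by auto
  have "C' (c' y) \<subseteq> closed_nbhd S E x"
  proof (cases "y \<in> unserved")
    case True
    then show ?thesis
      using class_unserved y by simp
  next
    case False
    then show ?thesis
      using class_served[of y] y closed_nbhd_S[OF x] by auto
  qed
  then show ?thesis
    using y(1) by blast
qed

lemma restricted_class_dominated:
  assumes y: "y \<in> S"
  shows "\<exists>w\<in>S. C' (c' y) \<subseteq> closed_nbhd S E w"
proof (cases "y \<in> unserved")
  case True
  then show ?thesis
    using class_unserved self_closed_nbhd y by metis
next
  case False
  obtain w where w: "w \<in> V" "C (c y) \<subseteq> N w"
    using dc y in_V unfolding dom_coloring_def by blast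
  have class_y: "C' (c' y) \<subseteq> C (c y) \<inter> S"
    using False y class_served by auto
  show ?thesis
  proof (cases "w \<in> S")
    case True
    then show ?thesis
      using class_y w closed_nbhd_S by blast
  next
    case False
    text \<open>Then \<open>N w\<close> meets \<open>S\<close> in at most one vertex.\<close>
    have "C' (c' y) \<subseteq> {y}"
    proof
      fix z assume "z \<in> C' (c' y)"
      then have "z \<in> N w" "y \<in> N w" "z \<in> S"
        using class_y w y C_mem in_V by auto
      then have "E w z" "E w y"
        using N_mem False y by auto
      then show "z \<in> {y}"
        using one_nbr[of w z y] False w \<open>z \<in> S\<close> y by blast
    qed
    then show ?thesis
      using y self_closed_nbhd by blast
  qed
qed

lemma dom_coloring_restricted: "dom_coloring S E c'"
  unfolding dom_coloring_def
  using restricted_proper restricted_vertex_dominates restricted_class_dominated by blast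

lemma restricted_colors: "c' ` S \<subseteq> c ` V"
  using dominated_color_spec in_V unfolding restricted_coloring_def by auto

end

lemma chi_dd_induced_le:
  assumes G: "simple_graph V E" and "S \<subseteq> V"
    and one_nbr: "\<And>w x y. w \<in> V - S \<Longrightarrow> x \<in> S \<Longrightarrow> y \<in> S \<Longrightarrow> E w x \<Longrightarrow> E w y \<Longrightarrow> x = y"
  shows "chi_dd S E \<le> chi_dd V E"
proof -
  have fin: "finite V"
    using G unfolding simple_graph_def by blast
  obtain c where c: "dom_coloring V E c" "card (c ` V) = chi_dd V E"
    using chi_dd_attained[OF fin] simple_graph_edge[OF G] by blast
  interpret dom_coloring_restriction V E c S
    using c(1) simple_graph_edge[OF G] \<open>S \<subseteq> V\<close> one_nbr by unfold_locales auto
  have "chi_dd S E \<le> card (restricted_coloring ` S)"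
    by (rule chi_dd_le_card[OF dom_coloring_restricted])
  also have "\<dots> \<le> card (c ` V)"
    by (rule card_mono) (use fin restricted_colors in auto)
  finally show ?thesis
    using c(2) by simp
qed

section \<open>Paths\<close>

lemma simple_graph_path: "simple_graph (path_V n) (path_E n)"
  unfolding simple_graph_def path_V_def path_E_def by auto

lemma chi_dd_path_le_Suc:
  "chi_dd (path_V n) (path_E n) \<le> chi_dd (path_V (Suc n)) (path_E (Suc n))"
proof -
  have "chi_dd (path_V n) (path_E n) = chi_dd (path_V n) (path_E (Suc n))"
    by (rule chi_dd_iso[of id, symmetric]) (auto simp: path_V_def path_E_def)
  also have "\<dots> \<le> chi_dd (path_V (Suc n)) (path_E (Suc n))"
    by (rule chi_dd_induced_le[OF simple_graph_path]) (auto simp: path_V_def path_E_def)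
  finally show ?thesis .
qed

lemma chi_dd_path_mono:
  "n \<le> n' \<Longrightarrow> chi_dd (path_V n) (path_E n) \<le> chi_dd (path_V n') (path_E n')"
  by (rule lift_Suc_mono_le[of "\<lambda>n. chi_dd (path_V n) (path_E n)"]) (use chi_dd_path_le_Suc in auto)

section \<open>Subdivisions\<close>

definition ordered_edges :: "('a::linorder \<Rightarrow> 'a \<Rightarrow> bool) \<Rightarrow> ('a \<times> 'a) set" where
  "ordered_edges E = {(u, v). u < v \<and> E u v}"

definition incident_edge_map :: "'a set \<Rightarrow> ('a::linorder \<Rightarrow> 'a \<Rightarrow> bool) \<Rightarrow> ('a \<Rightarrow> 'a \<times> 'a) \<Rightarrow> bool" where
  "incident_edge_map V E own \<longleftrightarrow>
     (\<forall>x\<in>V. own x \<in> ordered_edges E \<and> (x = fst (own x) \<or> x = snd (own x)))"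

definition spanning_edge_map ::
    "'a set \<Rightarrow> ('a::linorder \<Rightarrow> 'a \<Rightarrow> bool) \<Rightarrow> ('a \<Rightarrow> 'a \<times> 'a) \<Rightarrow> 'a \<Rightarrow> 'a \<Rightarrow> bool" where
  "spanning_edge_map V E own u0 v0 \<longleftrightarrow> incident_edge_map V E own \<and>
     own u0 = (u0, v0) \<and> own v0 = (u0, v0) \<and>
     (\<forall>(a, b)\<in>ordered_edges E - {(u0, v0)}. own a \<noteq> (a, b) \<or> own b \<noteq> (a, b))"

definition subdiv_edge_of :: "('a \<Rightarrow> 'a \<times> 'a) \<Rightarrow> 'a + 'a \<times> 'a \<times> nat \<Rightarrow> 'a \<times> 'a" where
  "subdiv_edge_of own z = (case z of Inl x \<Rightarrow> own x | Inr (u, v, i) \<Rightarrow> (u, v))"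

locale subdivision =
  fixes V :: "'a::linorder set" and E :: "'a \<Rightarrow> 'a \<Rightarrow> bool" and k :: nat
  assumes G: "simple_graph V E" and k_ge_2: "2 \<le> k"
begin

abbreviation "VS \<equiv> subdiv_V k V E"
abbreviation "ES \<equiv> subdiv_E k V E"

lemmas edge_props = simple_graph_edge[OF G]

lemma sub_pos_0 [simp]: "sub_pos k u v 0 = Inl u"
  and sub_pos_k [simp]: "sub_pos k u v k = Inl v"
  using k_ge_2 unfolding sub_pos_def by auto

lemma sub_pos_interior: "0 < i \<Longrightarrow> i < k \<Longrightarrow> sub_pos k u v i = Inr (u, v, i)"
  unfolding sub_pos_def by auto

lemma Inr_in_VS: "Inr (u, v, i) \<in> VS \<longleftrightarrow> u < v \<and> E u v \<and> 0 < i \<and> i < k"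
  unfolding subdiv_V_def by auto

lemma Inl_in_VS: "Inl x \<in> VS \<longleftrightarrow> x \<in> V"
  unfolding subdiv_V_def by auto

lemma sub_pos_eq_iff:
  "u \<noteq> v \<Longrightarrow> i \<le> k \<Longrightarrow> j \<le> k \<Longrightarrow> sub_pos k u v i = sub_pos k u v j \<longleftrightarrow> i = j"
  unfolding sub_pos_def by auto

lemma sub_pos_in_VS: "u < v \<Longrightarrow> E u v \<Longrightarrow> i \<le> k \<Longrightarrow> sub_pos k u v i \<in> VS"
  using edge_props[of u v] unfolding sub_pos_def subdiv_V_def by auto

lemma subdiv_E_sym: "ES x y \<Longrightarrow> ES y x"
  unfolding subdiv_E_def by blast

lemma subdiv_E_in_VS: "ES x y \<Longrightarrow> x \<in> VS \<and> y \<in> VS"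
  unfolding subdiv_E_def using sub_pos_in_VS by fastforce

lemma subdiv_E_irrefl: "\<not> ES x x"
proof -
  have "sub_pos k u v i \<noteq> sub_pos k u v (i + 1)" if "u < v" "i < k" for u v :: 'a and i
    using sub_pos_eq_iff[of u v i "i + 1"] that by simp
  then show ?thesis
    unfolding subdiv_E_def by metis
qed

lemma not_subdiv_E_Inl: "\<not> ES (Inl x) (Inl y)"
  using k_ge_2 unfolding subdiv_E_def sub_pos_def by (auto split: if_splits)

lemma subdiv_E_Inr:
  assumes "Inr (u, v, j) \<in> VS"
  shows "ES (Inr (u, v, j)) y \<longleftrightarrow> y = sub_pos k u v (j - 1) \<or> y = sub_pos k u v (j + 1)"
proof
  assume "ES (Inr (u, v, j)) y"
  then obtain u' v' i where "i < k"
    "Inr (u, v, j) = sub_pos k u' v' i \<and> y = sub_pos k u' v' (i + 1) \<or>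
     y = sub_pos k u' v' i \<and> Inr (u, v, j) = sub_pos k u' v' (i + 1)"
    unfolding subdiv_E_def by blast
  then show "y = sub_pos k u v (j - 1) \<or> y = sub_pos k u v (j + 1)"
    unfolding sub_pos_def by (auto split: if_splits)
next
  have uv: "u < v" "E u v" "0 < j" "j < k"
    using assms Inr_in_VS by auto
  assume "y = sub_pos k u v (j - 1) \<or> y = sub_pos k u v (j + 1)"
  then show "ES (Inr (u, v, j)) y"
  proof
    assume "y = sub_pos k u v (j - 1)"
    then show ?thesis
      using uv sub_pos_interior[of j u v] unfolding subdiv_E_def
      by (intro exI[of _ u] exI[of _ v] exI[of _ "j - 1"]) auto
  next
    assume "y = sub_pos k u v (j + 1)"
    then show ?thesis
      using uv sub_pos_interior[of j u v] unfolding subdiv_E_def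
      by (intro exI[of _ u] exI[of _ v] exI[of _ j]) auto
  qed
qed

lemma subdiv_E_sub_pos:
  assumes uv: "u < v" "E u v" and "i \<le> k" "j \<le> k"
  shows "ES (sub_pos k u v i) (sub_pos k u v j) \<longleftrightarrow> j = i + 1 \<or> i = j + 1"
proof -
  have interior: "ES (sub_pos k u v a) (sub_pos k u v b) \<longleftrightarrow> b = a + 1 \<or> a = b + 1"
    if ab: "0 < a" "a < k" "b \<le> k" for a b
  proof -
    have "ES (sub_pos k u v a) (sub_pos k u v b) \<longleftrightarrow>
        sub_pos k u v b = sub_pos k u v (a - 1) \<or> sub_pos k u v b = sub_pos k u v (a + 1)"
      using subdiv_E_Inr[of u v a] ab uv by (simp add: sub_pos_interior Inr_in_VS)
    also have "\<dots> \<longleftrightarrow> b = a + 1 \<or> a = b + 1"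
      using sub_pos_eq_iff[of u v b] ab uv by auto
    finally show ?thesis .
  qed
  consider "0 < i \<and> i < k" | "0 < j \<and> j < k" | "i \<in> {0, k}" "j \<in> {0, k}"
    using assms by fastforce
  then show ?thesis
  proof cases
    case 1
    then show ?thesis using interior assms by simp
  next
    case 2
    then show ?thesis using interior[of j i] assms subdiv_E_sym by auto
  next
    case 3
    then show ?thesis using not_subdiv_E_Inl k_ge_2 by auto
  qed
qed

lemma finite_VS: "finite VS"
proof -
  have "VS \<subseteq> Inl ` V \<union> Inr ` (V \<times> V \<times> {0..<k})"
    unfolding subdiv_V_def using edge_props by auto
  moreover have "finite (Inl ` V \<union> Inr ` (V \<times> V \<times> {0..<k}))"
    using G unfolding simple_graph_def by simp
  ultimately show ?thesis
    by (rule finite_subset)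
qed

lemma simple_graph_subdiv: "simple_graph VS ES"
  unfolding simple_graph_def
  using finite_VS subdiv_E_in_VS subdiv_E_irrefl subdiv_E_sym by metis

lemma subdiv_E_into_segment:
  assumes uv: "u < v" "E u v" and w: "w \<notin> sub_pos k u v ` {0..k}"
    and i: "i \<le> k" "ES w (sub_pos k u v i)"
  shows "i = 0 \<or> i = k"
proof (rule ccontr)
  assume "\<not> (i = 0 \<or> i = k)"
  then have "0 < i" "i < k"
    using i by auto
  then have "w = sub_pos k u v (i - 1) \<or> w = sub_pos k u v (i + 1)"
    using subdiv_E_Inr[of u v i w] subdiv_E_sym[OF i(2)] uv by (simp add: sub_pos_interior Inr_in_VS)
  moreover have "i - 1 \<in> {0..k}" "i + 1 \<in> {0..k}"
    using \<open>i < k\<close> by auto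
  ultimately show False
    using w by blast
qed

lemma not_subdiv_E_both_ends:
  assumes uv: "u < v" and w: "w \<notin> sub_pos k u v ` {0..k}"
    and adj: "ES w (Inl u)" "ES w (Inl v)"
  shows False
proof (cases w)
  case (Inl x)
  then show False
    using adj not_subdiv_E_Inl by simp
next
  case (Inr p)
  then obtain u' v' j where w_eq: "w = Inr (u', v', j)"
    by (cases p) auto
  have wVS: "w \<in> VS"
    using adj subdiv_E_in_VS by blast
  then have j: "u' < v'" "0 < j" "j < k"
    using w_eq Inr_in_VS by auto
  have "Inl u = sub_pos k u' v' (j - 1) \<or> Inl u = sub_pos k u' v' (j + 1)"
    "Inl v = sub_pos k u' v' (j - 1) \<or> Inl v = sub_pos k u' v' (j + 1)"
    using subdiv_E_Inr wVS adj w_eq by auto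
  then have "u' = u" "v' = v"
    using j uv unfolding sub_pos_def by (auto split: if_splits)
  then have "w = sub_pos k u v j"
    using w_eq j by (simp add: sub_pos_interior)
  then show False
    using w j by auto
qed

lemma subdiv_segment_one_neighbor:
  assumes uv: "u < v" "E u v" and w: "w \<notin> sub_pos k u v ` {0..k}"
    and xy: "x \<in> sub_pos k u v ` {0..k}" "y \<in> sub_pos k u v ` {0..k}" "ES w x" "ES w y"
  shows "x = y"
proof -
  obtain i j where ij: "i \<le> k" "j \<le> k" "x = sub_pos k u v i" "y = sub_pos k u v j"
    using xy by auto
  then have "i \<in> {0, k}" "j \<in> {0, k}"
    using subdiv_E_into_segment[OF uv w] xy by auto
  then show "x = y"
    using not_subdiv_E_both_ends[OF uv(1) w] ij xy subdiv_E_sym by auto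
qed

lemma chi_dd_segment:
  assumes uv: "u < v" "E u v" and "s + n \<le> k + 1"
  shows "chi_dd (sub_pos k u v ` {s..<s + n}) ES = chi_dd (path_V n) (path_E n)"
proof (rule chi_dd_iso)
  have "inj_on (\<lambda>i. sub_pos k u v (s + i)) {0..<n}"
    using sub_pos_eq_iff[of u v] uv assms(3) by (auto simp: inj_on_def)
  moreover have "(\<lambda>i. sub_pos k u v (s + i)) ` {0..<n} = sub_pos k u v ` {s..<s + n}"
    using image_image[of "sub_pos k u v" "(+) s" "{0..<n}"] by (simp add: add.commute)
  ultimately show "bij_betw (\<lambda>i. sub_pos k u v (s + i)) (path_V n) (sub_pos k u v ` {s..<s + n})"
    unfolding bij_betw_def path_V_def by blast
  show "ES (sub_pos k u v (s + a)) (sub_pos k u v (s + b)) \<longleftrightarrow> path_E n a b"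
    if "a \<in> path_V n" "b \<in> path_V n" for a b
    using subdiv_E_sub_pos[OF uv, of "s + a" "s + b"] that assms(3)
    unfolding path_V_def path_E_def by auto
qed

lemma chi_dd_path_le_subdiv:
  assumes uv: "u < v" "E u v"
  shows "chi_dd (path_V (k + 1)) (path_E (k + 1)) \<le> chi_dd VS ES"
proof -
  have "chi_dd (path_V (k + 1)) (path_E (k + 1)) = chi_dd (sub_pos k u v ` {0..k}) ES"
    using chi_dd_segment[OF uv, of 0 "k + 1"] by (simp add: atLeastLessThanSuc_atLeastAtMost)
  also have "\<dots> \<le> chi_dd VS ES"
    using simple_graph_subdiv subdiv_segment_one_neighbor[OF uv] sub_pos_in_VS[OF uv]
    by (intro chi_dd_induced_le) auto
  finally show ?thesis .
qed

lemma subdiv_part_eq_segment: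
  assumes own: "incident_edge_map V E own"
    and ab: "(a, b) \<in> ordered_edges E"
  shows "{z \<in> VS. subdiv_edge_of own z = (a, b)} = sub_pos k a b `
    {(if own a = (a, b) then 0 else 1)..<(if own b = (a, b) then k + 1 else k)}"
    (is "?P = sub_pos k a b ` {?lo..<?hi}")
proof (rule set_eqI)
  have ab': "a < b" "E a b" "a \<in> V" "b \<in> V"
    using ab edge_props unfolding ordered_edges_def by auto
  fix z
  show "z \<in> ?P \<longleftrightarrow> z \<in> sub_pos k a b ` {?lo..<?hi}"
  proof (cases z)
    case (Inl x)
    have "Inl x \<in> ?P \<longleftrightarrow> x \<in> V \<and> own x = (a, b)"
      by (simp add: Inl_in_VS subdiv_edge_of_def)
    also have "\<dots> \<longleftrightarrow> x = a \<and> own a = (a, b) \<or> x = b \<and> own b = (a, b)"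
      using own ab' unfolding incident_edge_map_def by force
    also have "\<dots> \<longleftrightarrow> Inl x \<in> sub_pos k a b ` {?lo..<?hi}"
      using k_ge_2 ab' by (auto simp: sub_pos_def image_iff split: if_splits)
    finally show ?thesis
      using Inl by simp
  next
    case (Inr r)
    then obtain a' b' i where z: "z = Inr (a', b', i)"
      by (cases r) auto
    have "z \<in> ?P \<longleftrightarrow> (a', b') = (a, b) \<and> 0 < i \<and> i < k"
      using ab' z by (auto simp: Inr_in_VS subdiv_edge_of_def)
    also have "\<dots> \<longleftrightarrow> z \<in> sub_pos k a b ` {?lo..<?hi}"
      using z by (auto simp: sub_pos_def image_iff split: if_splits intro: bexI[of _ i])
    finally show ?thesis .
  qed
qed

lemma chi_dd_subdiv_le:
  assumes own: "spanning_edge_map V E own u0 v0" and e0: "(u0, v0) \<in> ordered_edges E"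
  shows "chi_dd VS ES \<le> (card (ordered_edges E) - 1) * chi_dd (path_V k) (path_E k)
    + chi_dd (path_V (k + 1)) (path_E (k + 1))"
proof -
  define J where "J = ordered_edges E"
  define p where "p = chi_dd (path_V k) (path_E k)"
  define q where "q = chi_dd (path_V (k + 1)) (path_E (k + 1))"
  have "J \<subseteq> V \<times> V"
    unfolding J_def ordered_edges_def using edge_props by auto
  then have finJ: "finite J"
    using G finite_subset unfolding simple_graph_def by blast
  have part_le: "chi_dd {z \<in> VS. subdiv_edge_of own z = e} ES \<le> (if e = (u0, v0) then q else p)"
    if eJ: "e \<in> J" for e
  proof -
    obtain a b where e: "e = (a, b)" "a < b" "E a b"
      using eJ unfolding J_def ordered_edges_def by auto
    define lo where "lo = (if own a = (a, b) then 0 else 1 :: nat)"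
    define hi where "hi = (if own b = (a, b) then k + 1 else k)"
    have "{z \<in> VS. subdiv_edge_of own z = e} = sub_pos k a b ` {lo..<lo + (hi - lo)}"
      using subdiv_part_eq_segment[of own a b] own eJ k_ge_2
      unfolding e J_def lo_def hi_def spanning_edge_map_def by auto
    then have part: "chi_dd {z \<in> VS. subdiv_edge_of own z = e} ES = chi_dd (path_V (hi - lo)) (path_E (hi - lo))"
      using chi_dd_segment[OF e(2,3)] unfolding lo_def hi_def by auto
    show ?thesis
    proof (cases "e = (u0, v0)")
      case True
      then show ?thesis
        using part e own unfolding lo_def hi_def q_def spanning_edge_map_def by auto
    next
      case False
      then have "hi - lo \<le> k"
        using own eJ unfolding e J_def lo_def hi_def spanning_edge_map_def by auto
      then show ?thesis
        using part chi_dd_path_mono False unfolding p_def by auto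
    qed
  qed
  have "chi_dd VS ES \<le> (\<Sum>e\<in>J. chi_dd {z \<in> VS. subdiv_edge_of own z = e} ES)"
  proof (rule chi_dd_partition_le[OF finite_VS _ finJ])
    show "\<forall>z\<in>VS. \<not> ES z z"
      using subdiv_E_irrefl by blast
    show "subdiv_edge_of own z \<in> J" if z: "z \<in> VS" for z
    proof (cases z)
      case (Inl x)
      then show ?thesis
        using z own by (simp add: Inl_in_VS subdiv_edge_of_def J_def spanning_edge_map_def
            incident_edge_map_def)
    next
      case (Inr r)
      then show ?thesis
        using z by (cases r) (auto simp: Inr_in_VS subdiv_edge_of_def J_def ordered_edges_def)
    qed
  qed
  also have "\<dots> \<le> (\<Sum>e\<in>J. if e = (u0, v0) then q else p)"
    by (rule sum_mono) (rule part_le)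
  also have "\<dots> = q + (\<Sum>e\<in>J - {(u0, v0)}. p)"
    using e0 finJ unfolding J_def by (simp add: sum.remove)
  also have "\<dots> = (card J - 1) * p + q"
    using e0 finJ unfolding J_def by simp
  finally show ?thesis
    unfolding J_def p_def q_def .
qed

end

section \<open>Spanning edge maps\<close>

lemma card_ordered_edges:
  assumes G: "simple_graph V E"
  shows "card (ordered_edges E) = num_edges V E"
proof -
  define S where "S = {{u, v} | u v. u \<in> V \<and> v \<in> V \<and> E u v}"
  note E = simple_graph_edge[OF G]
  have "inj_on (\<lambda>(u, v). {u, v}) (ordered_edges E)"
    by (auto simp: inj_on_def ordered_edges_def doubleton_eq_iff)
  moreover have "(\<lambda>(u, v). {u, v}) ` ordered_edges E = S"
  proof (intro equalityI subsetI)
    fix s assume "s \<in> S"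
    then obtain u v where uv: "s = {u, v}" "E u v"
      unfolding S_def by blast
    then have "(min u v, max u v) \<in> ordered_edges E" "s = {min u v, max u v}"
      using E[OF uv(2)] by (auto simp: ordered_edges_def min_def max_def insert_commute)
    then show "s \<in> (\<lambda>(u, v). {u, v}) ` ordered_edges E"
      by force
  qed (use E in \<open>auto simp: S_def ordered_edges_def\<close>)
  ultimately show ?thesis
    unfolding num_edges_def S_def[symmetric] using card_image by fastforce
qed

lemma connected_graph_parent:
  assumes conn: "connected_graph V E" and r: "r \<in> V"
  obtains par :: "'a \<Rightarrow> 'a" and rank :: "'a \<Rightarrow> nat"
  where "\<And>x. x \<in> V \<Longrightarrow> x \<noteq> r \<Longrightarrow> E (par x) x \<and> rank (par x) < rank x"
proof -
  define rank where "rank x = (LEAST n. (E ^^ n) r x)" for x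
  have "\<exists>y. E y x \<and> rank y < rank x" if x: "x \<in> V - {r}" for x
  proof -
    have "E\<^sup>*\<^sup>* r x"
      using conn r x unfolding connected_graph_def by blast
    then have "\<exists>n. (E ^^ n) r x"
      by (rule rtranclp_imp_relpowp)
    then have path: "(E ^^ rank x) r x"
      unfolding rank_def by (rule LeastI_ex)
    then obtain n where n: "rank x = Suc n"
      using x by (cases "rank x") auto
    then obtain y where y: "(E ^^ n) r y" "E y x"
      using path by (metis relpowp_Suc_E)
    have "rank y \<le> n"
      unfolding rank_def by (rule Least_le) (rule y(1))
    then show ?thesis
      using y n by auto
  qed
  then obtain par where "\<forall>x\<in>V - {r}. E (par x) x \<and> rank (par x) < rank x"
    by (metis bchoice)
  then show ?thesis
    using that[of par rank] by blast
qed

text \<open>Every vertex other than \<open>u0, v0\<close> gets the edge to its parent; no edge is the parent edge of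
  both its ends, as ranks strictly decrease towards the root.\<close>
lemma spanning_edge_map_exists:
  assumes G: "simple_graph V E" and conn: "connected_graph V E"
    and e0: "(u0, v0) \<in> ordered_edges E"
  obtains own where "spanning_edge_map V E own u0 v0"
proof -
  note E = simple_graph_edge[OF G]
  have u0: "u0 \<in> V"
    using e0 E[of u0 v0] unfolding ordered_edges_def by simp
  obtain par and rank :: "'a \<Rightarrow> nat" where par: "\<And>x. x \<in> V \<Longrightarrow> x \<noteq> u0 \<Longrightarrow> E (par x) x \<and> rank (par x) < rank x"
    using connected_graph_parent[OF conn u0] by blast
  define own where "own x =
    (if x \<in> {u0, v0} then (u0, v0) else (min x (par x), max x (par x)))" for x
  have own_tree: "own x = (min x (par x), max x (par x))" "E (par x) x" "E x (par x)" "x \<noteq> par x"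
    if "x \<in> V" "x \<notin> {u0, v0}" for x
  proof -
    show "own x = (min x (par x), max x (par x))" "E (par x) x"
      using that par[of x] unfolding own_def by auto
    then show "E x (par x)" "x \<noteq> par x"
      using E by blast+
  qed
  have "own x \<in> ordered_edges E \<and> (x = fst (own x) \<or> x = snd (own x))" if x: "x \<in> V" for x
  proof (cases "x \<in> {u0, v0}")
    case True
    then show ?thesis
      using e0 unfolding own_def by auto
  next
    case False
    then show ?thesis
      using own_tree[OF x False] unfolding ordered_edges_def
      by (cases "x < par x") (auto simp: min_def max_def)
  qed
  moreover have "own a \<noteq> (a, b) \<or> own b \<noteq> (a, b)"
    if ab: "(a, b) \<in> ordered_edges E" "(a, b) \<noteq> (u0, v0)" for a b
  proof (rule ccontr)
    assume "\<not> (own a \<noteq> (a, b) \<or> own b \<noteq> (a, b))"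
    then have own_ab: "own a = (a, b)" "own b = (a, b)"
      by auto
    then have "a \<notin> {u0, v0}" "b \<notin> {u0, v0}"
      using ab(2) unfolding own_def by auto
    moreover have "a \<in> V" "b \<in> V" "a < b"
      using ab(1) E unfolding ordered_edges_def by blast+
    ultimately have "par a = b" "par b = a"
      using own_tree[of a] own_tree[of b] own_ab by (auto simp: min_def max_def split: if_splits)
    then show False
      using par[of a] par[of b] \<open>a \<in> V\<close> \<open>b \<in> V\<close> \<open>a \<notin> {u0, v0}\<close> \<open>b \<notin> {u0, v0}\<close> by auto
  qed
  moreover have "own u0 = (u0, v0)" "own v0 = (u0, v0)"
    unfolding own_def by auto
  ultimately show ?thesis
    using that[of own] unfolding spanning_edge_map_def incident_edge_map_def by blast
qed

theorem theorem5:
  fixes V :: "('a::linorder) set" and E :: "'a \<Rightarrow> 'a \<Rightarrow> bool" and k m :: nat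
  assumes "simple_graph V E" and "connected_graph V E"
    and "m = num_edges V E" and "m \<ge> 1" and "k \<ge> 2"
  shows "chi_dd (path_V (k + 1)) (path_E (k + 1)) \<le> chi_dd (subdiv_V k V E) (subdiv_E k V E)
       \<and> chi_dd (subdiv_V k V E) (subdiv_E k V E)
           \<le> (m - 1) * chi_dd (path_V k) (path_E k) + chi_dd (path_V (k + 1)) (path_E (k + 1))"
proof -
  interpret subdivision V E k
    using assms(1,5) by unfold_locales
  have m: "card (ordered_edges E) = m"
    using card_ordered_edges[OF assms(1)] assms(3) by simp
  then have "ordered_edges E \<noteq> {}"
    using assms(4) by auto
  then obtain u0 v0 where e0: "(u0, v0) \<in> ordered_edges E"
    by auto
  then have "chi_dd (path_V (k + 1)) (path_E (k + 1)) \<le> chi_dd VS ES"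
    by (intro chi_dd_path_le_subdiv) (auto simp: ordered_edges_def)
  moreover obtain own where "spanning_edge_map V E own u0 v0"
    using spanning_edge_map_exists[OF assms(1,2) e0] .
  then have "chi_dd VS ES \<le> (m - 1) * chi_dd (path_V k) (path_E k)
      + chi_dd (path_V (k + 1)) (path_E (k + 1))"
    using chi_dd_subdiv_le e0 m by blast
  ultimately show ?thesis
    by blast
qed

end
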